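(* (Bernstein inequality.) Let $c\in\mathbb{R}$, $T>0$ and $f\in\widetilde{B}^2_{c,T}$. Then for every $r\in\mathbb{N}$, $$\|\Theta_c^rf\|_{X^2_c}\le T^r\|f\|_{X^2_c}.$$
   Context: $\mathbb{R}^+=(0,\infty)$, $\Omega=\mathbb{C}\setminus[0,\infty)$. For $c\in\mathbb{R}$, $X^2_c$ is the space of measurable $f:\mathbb{R}^+\to\mathbb{C}$ with $f(x)x^{c-1/2}\in L^2(\mathbb{R}^+)$, normed by $\|f\|_{X^2_c}=\big(\int_0^\infty |f(u)|^2u^{2c-1}\,du\big)^{1/2}$. The Mellin derivative is $\Theta_c f(x)=xf'(x)+cf(x)$, with $\Theta_c^0 f=f$ and $\Theta_c^r=\Theta_c(\Theta_c^{r-1})$. The Mellin–Bernstein space $\widetilde{B}^2_{c,T}$ consists of all $f\in X^2_c$ such that $g(x):=x^cf(x)$ has an analytic extension to the Riemann surface of the logarithm, given by analytic branches $g_k:\Omega\to\mathbb{C}$, $k\in\mathbb{Z}$, with: (i) for every $x>0$ the limits $g_k^+(x)=\lim_{\varepsilon\to0^+}g_k(x+i\varepsilon)$ and $g_k^-(x)=\lim_{\varepsilon\to0^+}g_k(x-i\varepsilon)$ exist, $g_k^-(x)=g_{k+1}^+(x)$, and $g_0^+(x)=g(x)$; (ii) for every $x>0$ and every open disk $U_x$ in the right half-plane centered at $x$, the function $\psi_k:U_x\to\mathbb{C}$ equal to $g_k(z)$ for $\Im z<0$, to $g_k^-(z)$ for $z\in U_x\cap\mathbb{R}$, and to $g_{k+1}(z)$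 for $\Im z>0$, is analytic; (iii) there is $C>0$ such that $|g_k(re^{i\theta})|\le Ce^{T|2\pi k+\theta|}$ for all $k\in\mathbb{Z}$, $\theta\in[0,2\pi]$, $r>0$; (iv) for each $k$, $\lim_{r\to0}g_k(re^{i\theta})=\lim_{r\to\infty}g_k(re^{i\theta})=0$ uniformly in $\theta\in[0,2\pi]$. In (iii) and (iv), $g_k(re^{i0})$ means $g_k^+(r)$ and $g_k(re^{2\pi i})$ means $g_k^-(r)$. *)

theory Defs
  imports "HOL-Analysis.Analysis"
begin

definition X2 :: "real \<Rightarrow> (real \<Rightarrow> complex) \<Rightarrow> bool" where
  "X2 c f \<longleftrightarrow> set_borel_measurable lborel {0<..} f \<and>
     set_integrable lborel {0<..} (\<lambda>u. (cmod (f u))\<^sup>2 * u powr (2 * c - 1))"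

definition X2_norm :: "real \<Rightarrow> (real \<Rightarrow> complex) \<Rightarrow> real" where
  "X2_norm c f = sqrt (LINT u:{0<..}|lborel. (cmod (f u))\<^sup>2 * u powr (2 * c - 1))"

definition mellin_deriv :: "real \<Rightarrow> (real \<Rightarrow> complex) \<Rightarrow> real \<Rightarrow> complex" where
  "mellin_deriv c f x = of_real x * vector_derivative f (at x) + of_real c * f x"

definition slit_plane :: "complex set" where
  "slit_plane = UNIV - complex_of_real ` {0..}"

definition bplus :: "(complex \<Rightarrow> complex) \<Rightarrow> real \<Rightarrow> complex" where
  "bplus h x = Lim (at_right 0) (\<lambda>e::real. h (of_real x + \<i> * of_real e))"

definition bminus :: "(complex \<Rightarrow> complex) \<Rightarrow> real \<Rightarrow> complex" where
  "bminus h x = Lim (at_right 0) (\<lambda>e::real. h (of_real x - \<i> * of_real e))"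

definition glued :: "(int \<Rightarrow> complex \<Rightarrow> complex) \<Rightarrow> int \<Rightarrow> complex \<Rightarrow> complex" where
  "glued g k z = (if Im z < 0 then g k z
                  else if Im z = 0 then bminus (g k) (Re z)
                  else g (k + 1) z)"

definition polar_val :: "(int \<Rightarrow> complex \<Rightarrow> complex) \<Rightarrow> int \<Rightarrow> real \<Rightarrow> real \<Rightarrow> complex" where
  "polar_val g k r \<theta> = (if \<theta> = 0 then bplus (g k) r
                        else if \<theta> = 2 * pi then bminus (g k) r
                        else g k (of_real r * cis \<theta>))"

definition mellin_bernstein :: "real \<Rightarrow> real \<Rightarrow> (real \<Rightarrow> complex) \<Rightarrow> bool" where
  "mellin_bernstein c T f \<longleftrightarrow> X2 c f \<and>
    (\<exists>g :: int \<Rightarrow> complex \<Rightarrow> complex.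
       (\<forall>k. g k analytic_on slit_plane) \<and>
       \<comment> \<open>(i)\<close>
       (\<forall>k. \<forall>x>0. (\<exists>l. ((\<lambda>e::real. g k (of_real x + \<i> * of_real e)) \<longlongrightarrow> l) (at_right 0))
                 \<and> (\<exists>l. ((\<lambda>e::real. g k (of_real x - \<i> * of_real e)) \<longlongrightarrow> l) (at_right 0))
                 \<and> bminus (g k) x = bplus (g (k + 1)) x) \<and>
       (\<forall>x>0. bplus (g 0) x = of_real (x powr c) * f x) \<and>
       \<comment> \<open>(ii)\<close>
       (\<forall>k. \<forall>x>0. \<forall>\<rho>>0. ball (complex_of_real x) \<rho> \<subseteq> {z. Re z > 0} \<longrightarrow>
                 glued g k analytic_on ball (complex_of_real x) \<rho>) \<and>
       \<comment> \<open>(iii)\<close>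
       (\<exists>C>0. \<forall>k. \<forall>\<theta>\<in>{0..2*pi}. \<forall>r>0.
                 cmod (polar_val g k r \<theta>) \<le> C * exp (T * \<bar>2 * pi * of_int k + \<theta>\<bar>)) \<and>
       \<comment> \<open>(iv)\<close>
       (\<forall>k. uniform_limit {0..2*pi} (\<lambda>r \<theta>. polar_val g k r \<theta>) (\<lambda>_. 0) (at_right 0)
          \<and> uniform_limit {0..2*pi} (\<lambda>r \<theta>. polar_val g k r \<theta>) (\<lambda>_. 0) at_top))"

end

theory Submission
  imports Defs "HOL-Complex_Analysis.Complex_Analysis"
begin

(*
  In the variable t = ln x the branches g_k fit together into an entire function
  G(t) = e^{ct} f(e^t) of exponential type T, bounded on the real line; the Mellin derivative
  becomes d/dt, i.e. Theta_c^r f(x) = x^{-c} G^{(r)}(ln x), and ||h||_{X^2_c} is the L^2 norm of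
  t |-> e^{ct} h(e^t) on the real line.  Applying the residue theorem to
  G(s + w) / (w^2 cos (T w)) on large circles gives Boas' inequality
  |G'(s)| <= sum_n beta_n |G(s + eta_n)|, where the eta_n = (k + 1/2) pi / T are the zeros of
  cos (T w) and beta_n = 1 / (T eta_n^2) has total mass T.  By Cauchy-Schwarz and translation
  invariance of dt this yields ||G'||_2 <= T ||G||_2, and iterating gives the theorem.
*)

section \<open>Boas' interpolation nodes and weights\<close>

definition zigzag :: "nat \<Rightarrow> int" where
  "zigzag n = (if even n then int (n div 2) else - int (n div 2) - 1)"

lemma surj_zigzag: "surj zigzag"
proof -
  have "k \<in> range zigzag" for k
  proof (cases "k \<ge> 0")
    case True
    then show ?thesis by (intro image_eqI[of _ _ "2 * nat k"]) (auto simp: zigzag_def)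
  next
    case False
    then show ?thesis by (intro image_eqI[of _ _ "2 * nat (-k-1) + 1"]) (auto simp: zigzag_def)
  qed
  then show ?thesis by blast
qed

lemma inj_zigzag: "inj zigzag"
proof (rule inj_on_inverseI)
  show "nat (if zigzag n \<ge> 0 then 2 * zigzag n else - 2 * zigzag n - 1) = n" for n
    unfolding zigzag_def by (cases "even n") (auto elim!: evenE oddE)
qed

lemma abs_zigzag_add_half: "\<bar>real_of_int (zigzag n) + 1/2\<bar> = real (n div 2) + 1/2"
  unfolding zigzag_def by auto

text \<open>The nodes are the zeros of \<open>cos (T z)\<close>, enumerated through \<open>zigzag\<close>.\<close>

definition boas_node :: "real \<Rightarrow> nat \<Rightarrow> real" where
  "boas_node T n = (of_int (zigzag n) + 1/2) * pi / T"

definition boas_weight :: "real \<Rightarrow> nat \<Rightarrow> real" where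
  "boas_weight T n = 1 / (T * (boas_node T n)\<^sup>2)"

lemma abs_boas_node: "T > 0 \<Longrightarrow> \<bar>boas_node T n\<bar> = (real (n div 2) + 1/2) * pi / T"
  unfolding boas_node_def by (simp add: abs_mult abs_divide abs_zigzag_add_half)

lemma boas_node_nonzero: "T > 0 \<Longrightarrow> boas_node T n \<noteq> 0"
  using abs_boas_node[of T n] by auto

lemma boas_node_separated:
  assumes "T > 0" and "m \<noteq> n"
  shows "pi / T \<le> \<bar>boas_node T m - boas_node T n\<bar>"
proof -
  have "zigzag m \<noteq> zigzag n" using assms inj_zigzag by (auto dest: injD)
  then have "1 \<le> \<bar>real_of_int (zigzag m - zigzag n)\<bar>" by linarith
  moreover have "boas_node T m - boas_node T n = real_of_int (zigzag m - zigzag n) * pi / T"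
    unfolding boas_node_def using assms by (simp add: field_simps)
  ultimately show ?thesis
    using assms by (simp add: abs_mult abs_divide divide_right_mono)
qed

lemma inj_boas_node:
  assumes "T > 0" shows "inj (boas_node T)"
proof (rule injI, rule ccontr)
  fix m n assume "boas_node T m = boas_node T n" "m \<noteq> n"
  moreover have "pi / T > 0" using assms by simp
  ultimately show False using boas_node_separated[OF assms, of m n] by simp
qed

lemma cos_eq_0_iff_boas_node:
  assumes "T > 0"
  shows "cos (complex_of_real T * w) = 0 \<longleftrightarrow> (\<exists>n. w = complex_of_real (boas_node T n))"
proof -
  have node: "complex_of_real (boas_node T n) * complex_of_real T =
      complex_of_real (of_int (zigzag n) * pi) + complex_of_real pi / 2" for n
    unfolding boas_node_def using assms by (simp add: field_simps)
  show ?thesis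
  proof
    assume "cos (complex_of_real T * w) = 0"
    then obtain k :: int where k: "complex_of_real T * w = complex_of_real (k * pi) + of_real pi / 2"
      unfolding cos_eq_0 by blast
    obtain n where "zigzag n = k" using surj_zigzag by (metis surjD)
    then have "w * complex_of_real T = complex_of_real (boas_node T n) * complex_of_real T"
      using k node[of n] by (simp add: mult.commute)
    then show "\<exists>n. w = complex_of_real (boas_node T n)"
      using assms by auto
  next
    assume "\<exists>n. w = complex_of_real (boas_node T n)"
    then show "cos (complex_of_real T * w) = 0"
      unfolding cos_eq_0 using node by (auto simp: mult.commute)
  qed
qed

lemma boas_weight_eq:
  assumes "T > 0"
  shows "boas_weight T n = 4 * T / pi\<^sup>2 * (1 / (2 * real (n div 2) + 1)\<^sup>2)"
proof -
  define a where "a = 2 * real (n div 2) + 1"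
  have a: "a > 0" unfolding a_def by simp
  have "(boas_node T n)\<^sup>2 = (\<bar>boas_node T n\<bar>)\<^sup>2" by simp
  also have "\<dots> = (a * pi / (2 * T))\<^sup>2"
    unfolding abs_boas_node[OF assms] a_def by (simp add: field_simps)
  finally have "boas_weight T n = 1 / (T * (a * pi / (2 * T))\<^sup>2)"
    unfolding boas_weight_def by simp
  also have "\<dots> = 4 * T / pi\<^sup>2 * (1 / a\<^sup>2)"
    using assms a by (simp add: field_simps power2_eq_square)
  finally show ?thesis unfolding a_def .
qed

lemma boas_weight_nonneg: "T > 0 \<Longrightarrow> 0 \<le> boas_weight T n"
  by (simp add: boas_weight_eq)

lemma odd_inverse_squares_sums: "(\<lambda>m. 1 / (2 * real m + 1)\<^sup>2) sums (pi\<^sup>2 / 8)"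
proof -
  have isq: "(\<lambda>n. 1 / (real n + 1)\<^sup>2) sums (pi\<^sup>2 / 6)"
    using inverse_squares_sums by (simp add: add.commute)
  have pair: "{m * 2 ..< m * 2 + 2} = {2*m, Suc (2*m)}" for m :: nat by auto
  have all: "(\<lambda>m. 1 / (2 * real m + 1)\<^sup>2 + 1 / (2 * real m + 2)\<^sup>2) sums (pi\<^sup>2 / 6)"
    using sums_group[OF isq, of 2] by (simp add: pair ac_simps)
  have "(\<lambda>m. 1/4 * (1 / (real m + 1)\<^sup>2)) sums (1/4 * (pi\<^sup>2 / 6))"
    by (intro sums_mult isq)
  moreover have "1/4 * (1 / (real m + 1)\<^sup>2) = 1 / (2 * real m + 2)\<^sup>2" for m
    by (simp add: field_simps power2_eq_square)
  ultimately have even: "(\<lambda>m. 1 / (2 * real m + 2)\<^sup>2) sums (pi\<^sup>2 / 24)"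
    by simp
  from sums_diff[OF all even] show ?thesis by simp
qed

lemma sums_of_grouped_sums_nonneg:
  fixes f :: "nat \<Rightarrow> real"
  assumes f: "\<And>n. 0 \<le> f n" and k: "0 < k"
    and grouped: "(\<lambda>m. sum f {m * k ..< m * k + k}) sums s"
  shows "f sums s"
proof -
  have "summable f"
  proof (rule summableI_nonneg_bounded)
    fix n
    have "(\<Sum>i<n. f i) \<le> (\<Sum>i<n * k. f i)"
      using f k by (intro sum_mono2) auto
    also have "\<dots> = (\<Sum>m<n. sum f {m * k ..< m * k + k})"
      by (simp add: sum.nat_group)
    also have "\<dots> \<le> s"
      using grouped f by (intro sum_le_suminf[of _ _, where f = "\<lambda>m. sum f {m * k ..< m * k + k}",
          THEN order_trans]) (auto simp: sums_iff intro: sum_nonneg)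
    finally show "(\<Sum>i<n. f i) \<le> s" .
  qed (use f in auto)
  then have "(\<lambda>m. sum f {m * k ..< m * k + k}) sums suminf f"
    using k by (intro sums_group summable_sums)
  with grouped \<open>summable f\<close> show ?thesis
    using sums_unique2 summable_sums by metis
qed

lemma boas_weight_sums: assumes "T > 0" shows "boas_weight T sums T"
proof (rule sums_of_grouped_sums_nonneg[where k = 2])
  have pair: "{m * 2 ..< m * 2 + 2} = {2*m, Suc (2*m)}" for m :: nat by auto
  have "(\<lambda>m. 8 * T / pi\<^sup>2 * (1 / (2 * real m + 1)\<^sup>2)) sums (8 * T / pi\<^sup>2 * (pi\<^sup>2 / 8))"
    by (intro sums_mult odd_inverse_squares_sums)
  then show "(\<lambda>m. sum (boas_weight T) {m * 2 ..< m * 2 + 2}) sums T"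
    using assms by (simp add: pair boas_weight_eq)
qed (use boas_weight_nonneg[OF assms] in auto)

section \<open>Growth of the cosine on circles\<close>

lemma quarter_sq_le_sq_plus_sinh_sq:
  fixes E c :: real
  assumes E: "E \<ge> 1" and "1/4 \<le> c\<^sup>2 \<or> 2 \<le> E"
  shows "(E/4)\<^sup>2 \<le> c\<^sup>2 + (E - inverse E)\<^sup>2 / 4"
proof -
  define y where "y = inverse E"
  have "E * y = 1" using E unfolding y_def by simp
  then have sq: "(E - y)\<^sup>2 = E\<^sup>2 - 2 + y\<^sup>2" and "2 \<le> E\<^sup>2 + y\<^sup>2"
    using sum_squares_bound[of E y] by (simp_all add: power2_eq_square algebra_simps)
  have quarter: "(E/4)\<^sup>2 = E\<^sup>2 / 16" by (simp add: power_divide)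
  show ?thesis
  proof (cases "2 \<le> E")
    case True
    then have "y \<le> inverse 2" unfolding y_def by (intro le_imp_inverse_le) auto
    then have "(E/2)\<^sup>2 \<le> (E - y)\<^sup>2" using True by (intro power_mono) auto
    moreover have "(E/2)\<^sup>2 = E\<^sup>2 / 4" by (simp add: power_divide)
    ultimately show ?thesis
      using zero_le_power2[of c] unfolding quarter y_def[symmetric] by linarith
  next
    case False
    with assms(2) have "1/4 \<le> c\<^sup>2" by simp
    then show ?thesis
      using \<open>2 \<le> E\<^sup>2 + y\<^sup>2\<close> quarter sq zero_le_power2[of y] zero_le_power2[of E]
      unfolding y_def[symmetric] by linarith
  qed
qed

lemma norm_cos_ge_exp_abs_Im:
  fixes w :: complex
  assumes "1/2 \<le> \<bar>cos (Re w)\<bar> \<or> 1 \<le> \<bar>Im w\<bar>"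
  shows "exp \<bar>Im w\<bar> / 4 \<le> norm (cos w)"
proof -
  define E where "E = exp \<bar>Im w\<bar>"
  have E: "1 \<le> E" unfolding E_def by simp
  have "(exp (Im w) - inverse (exp (Im w)))\<^sup>2 = (E - inverse E)\<^sup>2"
    unfolding E_def by (cases "Im w \<ge> 0") (simp_all add: exp_minus[symmetric] power2_commute)
  then have norm_sq: "(norm (cos w))\<^sup>2 = (cos (Re w))\<^sup>2 + (E - inverse E)\<^sup>2 / 4"
    by (simp add: norm_cos_squared)
  have "1/2 \<le> \<bar>cos (Re w)\<bar> \<Longrightarrow> 1/4 \<le> (cos (Re w))\<^sup>2"
    using power_mono[of "1/2" "\<bar>cos (Re w)\<bar>" 2] by (simp add: power2_abs power_divide)
  moreover have "2 \<le> E" if "1 \<le> \<bar>Im w\<bar>"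
  proof -
    have "exp 1 \<le> E" unfolding E_def using that by simp
    then show ?thesis using exp_ge_add_one_self[of 1] by simp
  qed
  ultimately have "(E/4)\<^sup>2 \<le> (norm (cos w))\<^sup>2"
    unfolding norm_sq using quarter_sq_le_sq_plus_sinh_sq[OF E] assms by blast
  then show ?thesis unfolding E_def by (rule power2_le_imp_le) simp
qed

lemma abs_cos_ge_half_near_multiple_pi:
  fixes u :: real
  assumes "real N * pi - 1 \<le> \<bar>u\<bar>" "\<bar>u\<bar> \<le> real N * pi"
  shows "1/2 \<le> \<bar>cos u\<bar>"
proof -
  define d where "d = real N * pi - \<bar>u\<bar>"
  have d: "0 \<le> d" "d \<le> 1" using assms unfolding d_def by auto
  have "cos \<bar>u\<bar> = (-1)^N * cos d" unfolding d_def by (simp add: cos_diff)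
  then have "\<bar>cos u\<bar> = \<bar>cos d\<bar>" by (simp add: abs_mult)
  moreover have "cos (pi/3) \<le> cos d"
    using d pi_gt3 by (intro cos_monotone_0_pi_le) auto
  ultimately show ?thesis by (simp add: cos_60)
qed

text \<open>Near the real axis the circle \<open>|w| = N\<pi>\<close> stays away from the zeros of \<open>cos\<close>;
  away from it, \<open>|cos w|\<close> grows like \<open>e\<^bsup>|Im w|\<^esup>/2\<close>.\<close>

lemma norm_cos_on_circle_ge:
  fixes w :: complex
  assumes "norm w = real N * pi" "N \<ge> 1"
  shows "exp \<bar>Im w\<bar> / 4 \<le> norm (cos w)"
proof (rule norm_cos_ge_exp_abs_Im)
  show "1/2 \<le> \<bar>cos (Re w)\<bar> \<or> 1 \<le> \<bar>Im w\<bar>"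
  proof (rule disjCI)
    assume "\<not> 1 \<le> \<bar>Im w\<bar>"
    then have Im: "(Im w)\<^sup>2 \<le> 1" by (simp add: abs_square_le_1)
    have sq: "(Re w)\<^sup>2 + (Im w)\<^sup>2 = (real N * pi)\<^sup>2"
      using assms(1) cmod_power2[of w] by simp
    have "1 \<le> real N * pi" using assms(2) pi_gt3 mult_mono[of 1 "real N" 1 pi] by simp
    then have "(real N * pi - 1)\<^sup>2 \<le> (real N * pi)\<^sup>2 - 1"
      by (simp add: power2_eq_square algebra_simps)
    also have "\<dots> \<le> \<bar>Re w\<bar>\<^sup>2" using sq Im by simp
    finally have "real N * pi - 1 \<le> \<bar>Re w\<bar>" by (rule power2_le_imp_le) simp
    moreover have "\<bar>Re w\<bar>\<^sup>2 \<le> (real N * pi)\<^sup>2"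
      using sq zero_le_power2[of "Im w"] unfolding power2_abs by linarith
    then have "\<bar>Re w\<bar> \<le> real N * pi" by (rule power2_le_imp_le) simp
    ultimately show "1/2 \<le> \<bar>cos (Re w)\<bar>" by (rule abs_cos_ge_half_near_multiple_pi)
  qed
qed

section \<open>Boas' inequality\<close>

lemma boas_node_punctured_ball:
  assumes T: "T > 0" and w: "w \<in> ball (complex_of_real (boas_node T n)) (pi / (2 * T)) - {complex_of_real (boas_node T n)}"
  shows "w \<noteq> 0" and "cos (complex_of_real T * w) \<noteq> 0"
proof -
  have d: "norm (w - complex_of_real (boas_node T n)) < pi / (2 * T)"
    using w by (simp add: dist_norm norm_minus_commute)
  have "pi / (2 * T) \<le> \<bar>boas_node T n\<bar>"
    using T by (simp add: abs_boas_node field_simps)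
  then show "w \<noteq> 0" using d by auto
  show "cos (complex_of_real T * w) \<noteq> 0"
  proof
    assume "cos (complex_of_real T * w) = 0"
    then obtain m where m: "w = complex_of_real (boas_node T m)"
      using cos_eq_0_iff_boas_node[OF T] by blast
    then have "m \<noteq> n" using w by auto
    then have "pi / T \<le> norm (w - complex_of_real (boas_node T n))"
      using boas_node_separated[OF T] unfolding m by (simp flip: of_real_diff)
    moreover have "pi / (2 * T) < pi / T" using T by (simp add: field_simps)
    ultimately show False using d by simp
  qed
qed

lemma residue_at_boas_node:
  fixes F :: "complex \<Rightarrow> complex" and n :: nat
  assumes T: "T > 0" and F: "F holomorphic_on UNIV"
  defines "p \<equiv> complex_of_real (boas_node T n)"
  shows "residue (\<lambda>w. F (z + w) / cos (complex_of_real T * w) / w ^ Suc 1) p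
         = F (z + p) / p\<^sup>2 / (- complex_of_real T * sin (complex_of_real T * p))"
proof (rule residue_simple'[of "ball p (pi / (2 * T))"])
  have cos_p: "cos (complex_of_real T * p) = 0"
    unfolding p_def using cos_eq_0_iff_boas_node[OF T] by blast
  then have sin_p: "sin (complex_of_real T * p) \<noteq> 0"
    using sin_cos_squared_add[of "complex_of_real T * p"] by auto
  have p: "p \<noteq> 0" unfolding p_def using boas_node_nonzero[OF T] by simp
  show "open (ball p (pi / (2 * T)))" "p \<in> ball p (pi / (2 * T))" using T by auto
  show "(\<lambda>w. F (z + w) / cos (complex_of_real T * w) / w ^ Suc 1) holomorphic_on ball p (pi / (2 * T)) - {p}"
    using boas_node_punctured_ball[OF T] unfolding p_def
    by (intro holomorphic_intros holomorphic_on_compose_gen[OF _ F, unfolded o_def]) auto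
  have "((\<lambda>w. cos (complex_of_real T * w)) has_field_derivative - complex_of_real T * sin (complex_of_real T * p)) (at p)"
    by (auto intro!: derivative_eq_intros)
  then have "((\<lambda>w. (cos (complex_of_real T * w) - cos (complex_of_real T * p)) / (w - p))
              \<longlongrightarrow> - complex_of_real T * sin (complex_of_real T * p)) (at p)"
    unfolding has_field_derivative_iff .
  then have lim_inv: "((\<lambda>w. inverse (cos (complex_of_real T * w) / (w - p)))
              \<longlongrightarrow> inverse (- complex_of_real T * sin (complex_of_real T * p))) (at p)"
    unfolding cos_p using T sin_p by (intro tendsto_inverse) auto
  have cont_F: "isCont F x" for x
    using holomorphic_on_imp_continuous_on[OF F] by (simp add: continuous_on_eq_continuous_at)
  have "isCont (\<lambda>w. F (z + w)) p" by (rule isCont_o2[OF _ cont_F]) simp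
  then have "isCont (\<lambda>w. F (z + w) / w\<^sup>2) p"
    using p by (intro continuous_intros) auto
  then have "((\<lambda>w. F (z + w) / w\<^sup>2 * inverse (cos (complex_of_real T * w) / (w - p)))
      \<longlongrightarrow> F (z + p) / p\<^sup>2 * inverse (- complex_of_real T * sin (complex_of_real T * p))) (at p)"
    using lim_inv by (intro tendsto_mult) (simp_all add: isCont_def)
  then show "((\<lambda>w. F (z + w) / cos (complex_of_real T * w) / w ^ Suc 1 * (w - p))
      \<longlongrightarrow> F (z + p) / p\<^sup>2 / (- complex_of_real T * sin (complex_of_real T * p))) (at p)"
    by (simp add: field_simps power2_eq_square)
qed

lemma norm_residue_at_boas_node:
  fixes F :: "complex \<Rightarrow> complex" and n :: nat
  assumes T: "T > 0"
  defines "p \<equiv> complex_of_real (boas_node T n)"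
  shows "norm (F (z + p) / p\<^sup>2 / (- complex_of_real T * sin (complex_of_real T * p)))
         = boas_weight T n * norm (F (z + p))"
proof -
  have "cos (complex_of_real T * p) = 0"
    unfolding p_def using cos_eq_0_iff_boas_node[OF T] by blast
  then have "(norm (sin (complex_of_real T * p)))\<^sup>2 = 1"
    using sin_cos_squared_add[of "complex_of_real T * p"] by (simp flip: norm_power)
  then have "norm (sin (complex_of_real T * p)) = 1"
    using norm_ge_zero[of "sin (complex_of_real T * p)"] by (auto simp: power2_eq_1_iff)
  then show ?thesis
    using T unfolding p_def boas_weight_def by (simp add: norm_divide norm_mult norm_power)
qed

lemma norm_sum_residues_at_boas_nodes_le:
  fixes F :: "complex \<Rightarrow> complex"
  assumes T: "T > 0" and F: "F holomorphic_on UNIV"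
  shows "norm (\<Sum>w\<in>(\<lambda>n. complex_of_real (boas_node T n)) ` {..<2*N}.
                 residue (\<lambda>w. F (z + w) / cos (complex_of_real T * w) / w ^ Suc 1) w)
         \<le> (\<Sum>n<2*N. boas_weight T n * norm (F (z + complex_of_real (boas_node T n))))"
proof -
  have "inj_on (\<lambda>n. complex_of_real (boas_node T n)) {..<2*N}"
    using inj_boas_node[OF T] by (auto simp: inj_on_def inj_def)
  then have "(\<Sum>w\<in>(\<lambda>n. complex_of_real (boas_node T n)) ` {..<2*N}.
                 residue (\<lambda>w. F (z + w) / cos (complex_of_real T * w) / w ^ Suc 1) w)
      = (\<Sum>n<2*N. F (z + complex_of_real (boas_node T n)) / (complex_of_real (boas_node T n))\<^sup>2
            / (- complex_of_real T * sin (complex_of_real T * complex_of_real (boas_node T n))))"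
    by (subst sum.reindex) (simp_all only: o_def residue_at_boas_node[OF T F])
  then show ?thesis
    by (simp only:) (rule order_trans[OF norm_sum], simp only: norm_residue_at_boas_node[OF T] order_refl)
qed

lemma cos_nonzero_off_boas_nodes:
  assumes T: "T > 0"
    and w: "norm w < (real N + 1/4) * pi / T" "w \<notin> (\<lambda>n. complex_of_real (boas_node T n)) ` {..<2*N}"
  shows "cos (complex_of_real T * w) \<noteq> 0"
proof
  assume "cos (complex_of_real T * w) = 0"
  then obtain m where m: "w = complex_of_real (boas_node T m)"
    using cos_eq_0_iff_boas_node[OF T] by blast
  then have "(real (m div 2) + 1/2) * pi / T < (real N + 1/4) * pi / T"
    using w(1) by (simp add: abs_boas_node[OF T])
  then have "real (m div 2) + 1/2 < real N + 1/4"
    using T by (simp add: divide_less_cancel)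
  then have "m div 2 < N" by linarith
  then have "m < 2 * N" by linarith
  then show False using w(2) m by auto
qed

lemma deriv_shift_div_cos:
  assumes F: "F holomorphic_on UNIV"
  shows "deriv (\<lambda>w. F (z + w) / cos (complex_of_real T * w)) 0 = deriv F z"
proof -
  have "(F has_field_derivative deriv F z) (at z)"
    using F by (simp add: DERIV_deriv_iff_field_differentiable holomorphic_on_imp_differentiable_at)
  then have num: "((\<lambda>w. F (z + w)) has_field_derivative deriv F z * 1) (at 0)"
    by (intro DERIV_chain2[where f = F and g = "\<lambda>w. z + w"]) (auto intro!: derivative_eq_intros)
  have den: "((\<lambda>w. cos (complex_of_real T * w)) has_field_derivative 0) (at 0)"
    by (auto intro!: derivative_eq_intros)
  have "((\<lambda>w. F (z + w) / cos (complex_of_real T * w)) has_field_derivative deriv F z) (at 0)"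
    using DERIV_divide[OF num den] by simp
  then show ?thesis by (rule DERIV_imp_deriv)
qed

lemma abs_boas_node_less:
  assumes "T > 0" and "n < 2 * N"
  shows "\<bar>boas_node T n\<bar> < real N * pi / T"
proof -
  have "n div 2 < N" using assms(2) by auto
  then have "real (n div 2) + 1/2 < real N" by linarith
  then show ?thesis unfolding abs_boas_node[OF assms(1)] using assms(1)
    by (intro divide_strict_right_mono mult_strict_right_mono) auto
qed

lemma norm_shift_div_cos_on_circle_le:
  fixes F :: "complex \<Rightarrow> complex"
  assumes T: "T > 0" and bound: "\<And>w. norm (F w) \<le> M * exp (T * \<bar>Im w\<bar>)"
    and N: "N \<ge> 1" and w: "norm w = real N * pi / T"
  shows "norm (F (of_real s + w) / cos (complex_of_real T * w)) \<le> 4 * M"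
proof -
  have M: "M \<ge> 0" using order_trans[OF norm_ge_zero bound[of 0]] by simp
  have "exp (T * \<bar>Im w\<bar>) / 4 \<le> norm (cos (complex_of_real T * w))"
    using norm_cos_on_circle_ge[of "complex_of_real T * w" N] w T N by (simp add: norm_mult abs_mult)
  then have "norm (F (of_real s + w) / cos (complex_of_real T * w))
      \<le> M * exp (T * \<bar>Im w\<bar>) / (exp (T * \<bar>Im w\<bar>) / 4)"
    unfolding norm_divide using bound[of "of_real s + w"] M by (intro frac_le) auto
  then show ?thesis by simp
qed

text \<open>Integrating \<open>F (s + w) / (w\<^sup>2 cos (T w))\<close> over the circle \<open>|w| = N\<pi>/T\<close>: the residue at
  \<open>0\<close> is \<open>F'(s)\<close>, the residues at the nodes give the weighted sum, and the integral is
  small because \<open>cos (T w)\<close> grows as fast as \<open>F\<close> there.\<close>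

lemma boas_partial_sum_bound:
  fixes F :: "complex \<Rightarrow> complex"
  assumes T: "T > 0" and F: "F holomorphic_on UNIV"
    and bound: "\<And>w. norm (F w) \<le> M * exp (T * \<bar>Im w\<bar>)" and N: "N \<ge> 1"
  shows "norm (deriv F (of_real s)) \<le>
           (\<Sum>n<2*N. boas_weight T n * norm (F (of_real s + complex_of_real (boas_node T n)))) + 4 * M / (real N * pi / T)"
proof -
  define r where "r = real N * pi / T"
  define \<phi> where "\<phi> = (\<lambda>w. F (of_real s + w) / cos (complex_of_real T * w))"
  define S where "S = (\<lambda>n. complex_of_real (boas_node T n)) ` {..<2*N}"
  define Res where "Res = (\<Sum>w\<in>S. residue (\<lambda>w. \<phi> w / w ^ Suc 1) w)"
  have r: "r > 0" unfolding r_def using T N by simp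
  have M: "M \<ge> 0" using order_trans[OF norm_ge_zero bound[of 0]] by simp
  have "norm ((deriv ^^ 1) \<phi> 0 / fact 1 + Res) \<le> 4 * M / r ^ 1"
    unfolding Res_def
  proof (rule fps_coeff_residues_bound[where A = "ball 0 ((real N + 1/4) * pi / T)" and k = "{}"])
    have "r < (real N + 1/4) * pi / T"
      unfolding r_def using T by (intro divide_strict_right_mono) auto
    then show "cball 0 r \<subseteq> ball 0 ((real N + 1/4) * pi / T)" by auto
    show "S \<subseteq> ball 0 r" unfolding S_def r_def using abs_boas_node_less[OF T] by auto
    show "0 \<notin> S" unfolding S_def using boas_node_nonzero[OF T] by auto
    show "\<phi> holomorphic_on ball 0 ((real N + 1/4) * pi / T) - S"
      unfolding \<phi>_def S_def using cos_nonzero_off_boas_nodes[OF T]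
      by (intro holomorphic_intros holomorphic_on_compose_gen[OF _ F, unfolded o_def]) auto
    show "norm (\<phi> w) \<le> 4 * M" if "norm w = r" for w
      unfolding \<phi>_def using norm_shift_div_cos_on_circle_le[OF T bound N] that r_def by simp
  qed (use r M in \<open>auto simp: S_def\<close>)
  moreover have "(deriv ^^ 1) \<phi> 0 = deriv F (of_real s)"
    using deriv_shift_div_cos[OF F] unfolding \<phi>_def by simp
  ultimately have "norm (deriv F (of_real s) + Res) \<le> 4 * M / r"
    by simp
  then have "norm (deriv F (of_real s)) \<le> norm Res + 4 * M / r"
    using norm_triangle_ineq4[of "deriv F (of_real s) + Res" Res] by simp
  also have "norm Res \<le> (\<Sum>n<2*N. boas_weight T n * norm (F (of_real s + complex_of_real (boas_node T n))))"
    unfolding Res_def S_def \<phi>_def by (rule norm_sum_residues_at_boas_nodes_le[OF T F])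
  finally show ?thesis unfolding r_def by simp
qed

lemma boas_inequality:
  fixes F :: "complex \<Rightarrow> complex"
  assumes T: "T > 0" and F: "F holomorphic_on UNIV"
    and bound: "\<And>w. norm (F w) \<le> M * exp (T * \<bar>Im w\<bar>)"
  shows "summable (\<lambda>n. boas_weight T n * norm (F (of_real (s + boas_node T n))))"
    and "norm (deriv F (of_real s)) \<le> (\<Sum>n. boas_weight T n * norm (F (of_real (s + boas_node T n))))"
proof -
  show summable: "summable (\<lambda>n. boas_weight T n * norm (F (of_real (s + boas_node T n))))"
  proof (rule summable_comparison_test')
    show "summable (\<lambda>n. M * boas_weight T n)"
      using sums_summable[OF boas_weight_sums[OF T]] by (rule summable_mult)
    fix n
    have "norm (F (of_real (s + boas_node T n))) \<le> M"
      using bound[of "of_real (s + boas_node T n)"] by simp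
    from mult_left_mono[OF this boas_weight_nonneg[OF T, of n]]
    show "norm (boas_weight T n * norm (F (of_real (s + boas_node T n)))) \<le> M * boas_weight T n"
      using boas_weight_nonneg[OF T, of n]
      by (simp add: abs_mult mult.commute)
  qed
  define S where "S = (\<Sum>n. boas_weight T n * norm (F (of_real (s + boas_node T n))))"
  have "norm (deriv F (of_real s)) \<le> S + (4 * M * T / pi) / real N" if "N \<ge> 1" for N
  proof -
    have "(\<Sum>n<2*N. boas_weight T n * norm (F (of_real (s + boas_node T n)))) \<le> S"
      unfolding S_def using summable boas_weight_nonneg[OF T] by (intro sum_le_suminf) auto
    moreover have eq: "4 * M / (real N * pi / T) = (4 * M * T / pi) / real N" by (simp add: field_simps)
    ultimately show ?thesis
      using boas_partial_sum_bound[OF T F bound that, of s, unfolded eq] by simp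
  qed
  moreover have "(\<lambda>N. S + (4 * M * T / pi) / real N) \<longlonglongrightarrow> S + 0"
    by (intro tendsto_intros)
  ultimately have "norm (deriv F (of_real s)) \<le> S + 0"
    by (intro LIMSEQ_le_const) (auto intro: exI[of _ 1])
  then show "norm (deriv F (of_real s)) \<le> S" by simp
qed

section \<open>Bernstein's inequality in \<open>L\<^sup>2\<close> of the real line\<close>

lemma nn_integral_dx_over_x_dilation:
  fixes \<psi> :: "real \<Rightarrow> real"
  assumes [measurable]: "\<psi> \<in> borel_measurable borel" and a: "a > 0"
  shows "(\<integral>\<^sup>+x. ennreal (indicator {0<..} x * (\<psi> (x * a))\<^sup>2 / x) \<partial>lborel)
       = (\<integral>\<^sup>+x. ennreal (indicator {0<..} x * (\<psi> x)\<^sup>2 / x) \<partial>lborel)"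
proof -
  let ?f = "\<lambda>y. ennreal (indicator {0<..} y * (\<psi> y)\<^sup>2 / y)"
  have "(\<integral>\<^sup>+x. ?f x \<partial>lborel) = \<bar>a\<bar> * (\<integral>\<^sup>+x. ?f (0 + a * x) \<partial>lborel)"
    using a by (intro nn_integral_real_affine) auto
  also have "\<dots> = (\<integral>\<^sup>+x. ennreal a * ?f (a * x) \<partial>lborel)"
    using a by (subst nn_integral_cmult) auto
  also have "\<dots> = (\<integral>\<^sup>+x. ennreal (indicator {0<..} x * (\<psi> (x * a))\<^sup>2 / x) \<partial>lborel)"
  proof (intro nn_integral_cong)
    fix x :: real
    show "ennreal a * ?f (a * x) = ennreal (indicator {0<..} x * (\<psi> (x * a))\<^sup>2 / x)"
    proof (cases "x > 0")
      case True
      then have "ennreal a * ?f (a * x) = ennreal (a * ((\<psi> (a * x))\<^sup>2 / (a * x)))"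
        using a by (subst ennreal_mult) auto
      then show ?thesis using a True by (simp add: mult.commute)
    next
      case False
      then show ?thesis using a by (simp add: zero_less_mult_iff)
    qed
  qed
  finally show ?thesis ..
qed

text \<open>The weighted Cauchy--Schwarz inequality \<open>(\<Sum> \<beta>\<^sub>n u\<^sub>n)\<^sup>2 \<le> (\<Sum> \<beta>\<^sub>n) (\<Sum> \<beta>\<^sub>n u\<^sub>n\<^sup>2)\<close>, with the right-hand
  side left as a symmetrised double series so that it can be integrated termwise.\<close>

lemma ennreal_square_suminf_le_double_suminf:
  fixes \<beta> u :: "nat \<Rightarrow> real"
  assumes \<beta>: "\<And>n. 0 \<le> \<beta> n" and u: "\<And>n. 0 \<le> u n" and w: "0 \<le> w"
    and summable: "summable (\<lambda>n. \<beta> n * u n)"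
  shows "ennreal ((\<Sum>n. \<beta> n * u n)\<^sup>2 * w)
         \<le> (\<Sum>n. \<Sum>m. ennreal (\<beta> n * \<beta> m / 2) * (ennreal ((u n)\<^sup>2 * w) + ennreal ((u m)\<^sup>2 * w)))"
proof -
  define a where "a = (\<lambda>n. \<beta> n * u n)"
  have a: "0 \<le> a n" for n unfolding a_def using \<beta> u by simp
  have "ennreal ((\<Sum>n. a n)\<^sup>2 * w) = ennreal (\<Sum>n. a n) * ennreal (\<Sum>n. a n) * ennreal w"
    using suminf_nonneg[OF summable[folded a_def] a] w
    by (simp add: ennreal_mult power2_eq_square)
  also have "\<dots> = (\<Sum>n. \<Sum>m. ennreal (a n) * ennreal (a m) * ennreal w)"
    using suminf_ennreal2[OF a summable[folded a_def]] by (simp add: mult.assoc)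
  also have "\<dots> \<le> (\<Sum>n. \<Sum>m. ennreal (\<beta> n * \<beta> m / 2) * (ennreal ((u n)\<^sup>2 * w) + ennreal ((u m)\<^sup>2 * w)))"
  proof (intro suminf_le summableI allI)
    fix n m
    have "a n * a m * w = \<beta> n * \<beta> m * (u n * u m) * w" unfolding a_def by simp
    also have "\<dots> \<le> \<beta> n * \<beta> m * (((u n)\<^sup>2 + (u m)\<^sup>2) / 2) * w"
      using \<beta> w sum_squares_bound[of "u n" "u m"]
      by (intro mult_right_mono mult_left_mono) (auto simp: power2_eq_square)
    also have "\<dots> = \<beta> n * \<beta> m / 2 * ((u n)\<^sup>2 * w + (u m)\<^sup>2 * w)"
      by (simp add: algebra_simps)
    finally have le: "a n * a m * w \<le> \<beta> n * \<beta> m / 2 * ((u n)\<^sup>2 * w + (u m)\<^sup>2 * w)" .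
    have "ennreal (a n) * ennreal (a m) * ennreal w = ennreal (a n * a m * w)"
      using a w by (simp add: ennreal_mult)
    also have "\<dots> \<le> ennreal (\<beta> n * \<beta> m / 2 * ((u n)\<^sup>2 * w + (u m)\<^sup>2 * w))"
      using le by (rule ennreal_leI)
    also have "\<dots> = ennreal (\<beta> n * \<beta> m / 2) * (ennreal ((u n)\<^sup>2 * w) + ennreal ((u m)\<^sup>2 * w))"
      using \<beta> w by (subst ennreal_mult) (auto intro: ennreal_plus)
    finally show "ennreal (a n) * ennreal (a m) * ennreal w
        \<le> ennreal (\<beta> n * \<beta> m / 2) * (ennreal ((u n)\<^sup>2 * w) + ennreal ((u m)\<^sup>2 * w))" .
  qed
  finally show ?thesis unfolding a_def .
qed

lemma suminf_suminf_ennreal_product_weights: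
  fixes \<beta> :: "nat \<Rightarrow> real"
  assumes \<beta>: "\<And>n. 0 \<le> \<beta> n" and sums: "\<beta> sums B"
  shows "(\<Sum>n. \<Sum>m. ennreal (\<beta> n * \<beta> m / 2) * (I + I)) = ennreal (B\<^sup>2) * I"
proof -
  have "ennreal (\<beta> n * \<beta> m / 2) * (I + I) = ennreal (\<beta> n) * ennreal (\<beta> m) * I" for n m
  proof -
    have "ennreal (\<beta> n * \<beta> m / 2) * (I + I) = ennreal (\<beta> n * \<beta> m / 2) * ennreal 2 * I"
      by (simp add: mult_2[symmetric] mult.assoc)
    also have "ennreal (\<beta> n * \<beta> m / 2) * ennreal 2 = ennreal (\<beta> n * \<beta> m)"
      using \<beta> by (subst ennreal_mult[symmetric]) auto
    finally show ?thesis using \<beta> by (simp add: ennreal_mult)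
  qed
  then have "(\<Sum>n. \<Sum>m. ennreal (\<beta> n * \<beta> m / 2) * (I + I)) = (\<Sum>n. ennreal (\<beta> n)) * (\<Sum>m. ennreal (\<beta> m)) * I"
    by (simp add: mult.assoc)
  also have "(\<Sum>n. ennreal (\<beta> n)) = ennreal B"
    using suminf_ennreal2[OF \<beta> sums_summable[OF sums]] sums_unique[OF sums] by simp
  also have "ennreal B * ennreal B = ennreal (B\<^sup>2)"
    using sums_le[OF _ sums_zero sums] \<beta> by (simp add: power2_eq_square ennreal_mult)
  finally show ?thesis .
qed

lemma dx_over_x_energy_le_dilation_average:
  fixes \<psi> \<psi>\<^sub>1 :: "real \<Rightarrow> real" and \<beta> \<eta> :: "nat \<Rightarrow> real"
  assumes [measurable]: "\<psi> \<in> borel_measurable borel"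
    and \<psi>: "\<And>x. 0 \<le> \<psi> x" and \<psi>\<^sub>1: "\<And>x. 0 \<le> \<psi>\<^sub>1 x" and \<beta>: "\<And>n. 0 \<le> \<beta> n" and sums: "\<beta> sums B"
    and summable: "\<And>x. x > 0 \<Longrightarrow> summable (\<lambda>n. \<beta> n * \<psi> (x * exp (\<eta> n)))"
    and average: "\<And>x. x > 0 \<Longrightarrow> \<psi>\<^sub>1 x \<le> (\<Sum>n. \<beta> n * \<psi> (x * exp (\<eta> n)))"
  shows "(\<integral>\<^sup>+x. ennreal (indicator {0<..} x * (\<psi>\<^sub>1 x)\<^sup>2 / x) \<partial>lborel)
         \<le> ennreal (B\<^sup>2) * (\<integral>\<^sup>+x. ennreal (indicator {0<..} x * (\<psi> x)\<^sup>2 / x) \<partial>lborel)"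
proof -
  define I where "I = (\<integral>\<^sup>+x. ennreal (indicator {0<..} x * (\<psi> x)\<^sup>2 / x) \<partial>lborel)"
  define q where "q = (\<lambda>n x. ennreal (indicator {0<..} x * (\<psi> (x * exp (\<eta> n)))\<^sup>2 / x))"
  have [measurable]: "q n \<in> borel_measurable lborel" for n unfolding q_def by measurable
  have "ennreal (indicator {0<..} x * (\<psi>\<^sub>1 x)\<^sup>2 / x)
        \<le> (\<Sum>n. \<Sum>m. ennreal (\<beta> n * \<beta> m / 2) * (q n x + q m x))" for x
  proof (cases "x > 0")
    case True
    have "(\<psi>\<^sub>1 x)\<^sup>2 * (1 / x) \<le> (\<Sum>n. \<beta> n * \<psi> (x * exp (\<eta> n)))\<^sup>2 * (1 / x)"
      using True \<psi>\<^sub>1 average[OF True] by (intro mult_right_mono power_mono) auto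
    then have "ennreal (indicator {0<..} x * (\<psi>\<^sub>1 x)\<^sup>2 / x)
        \<le> ennreal ((\<Sum>n. \<beta> n * \<psi> (x * exp (\<eta> n)))\<^sup>2 * (1 / x))"
      using True by (intro ennreal_leI) simp
    also have "\<dots> \<le> (\<Sum>n. \<Sum>m. ennreal (\<beta> n * \<beta> m / 2) * (q n x + q m x))"
      using ennreal_square_suminf_le_double_suminf[OF \<beta> \<psi> _ summable[OF True], of "1 / x"] True
      unfolding q_def by simp
    finally show ?thesis .
  qed simp
  then have "(\<integral>\<^sup>+x. ennreal (indicator {0<..} x * (\<psi>\<^sub>1 x)\<^sup>2 / x) \<partial>lborel)
      \<le> (\<integral>\<^sup>+x. (\<Sum>n. \<Sum>m. ennreal (\<beta> n * \<beta> m / 2) * (q n x + q m x)) \<partial>lborel)"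
    by (intro nn_integral_mono)
  also have "\<dots> = (\<Sum>n. \<Sum>m. ennreal (\<beta> n * \<beta> m / 2) * (I + I))"
    using nn_integral_dx_over_x_dilation[of \<psi> "exp (\<eta> _)"]
    by (simp add: nn_integral_suminf nn_integral_cmult nn_integral_add q_def I_def)
  also have "\<dots> = ennreal (B\<^sup>2) * I"
    by (rule suminf_suminf_ennreal_product_weights[OF \<beta> sums])
  finally show ?thesis unfolding I_def .
qed

lemma exponential_type_higher_deriv:
  fixes G :: "complex \<Rightarrow> complex"
  assumes G: "G holomorphic_on UNIV" and bound: "\<And>z. norm (G z) \<le> C * exp (T * \<bar>Im z\<bar>)" and T: "T > 0"
  shows "\<exists>M. \<forall>z. norm ((deriv ^^ r) G z) \<le> M * exp (T * \<bar>Im z\<bar>)"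
proof (cases "r = 0")
  case True
  then show ?thesis using bound by auto
next
  case False
  have C: "C \<ge> 0" using order_trans[OF norm_ge_zero bound[of 0]] by simp
  have "norm ((deriv ^^ r) G z) \<le> (fact r * (C * exp T + 1)) * exp (T * \<bar>Im z\<bar>)" for z
  proof -
    define B where "B = C * exp (T * (\<bar>Im z\<bar> + 1)) + 1"
    have "norm ((deriv ^^ r) G z) \<le> fact r * B / 1 ^ r"
    proof (rule Cauchy_higher_deriv_bound)
      show "G holomorphic_on ball z 1" "continuous_on (cball z 1) G"
        using G holomorphic_on_subset holomorphic_on_imp_continuous_on continuous_on_subset by blast+
      fix w assume w: "w \<in> ball z 1"
      have "\<bar>Im w\<bar> \<le> \<bar>Im z\<bar> + norm (w - z)"
        using abs_Im_le_cmod[of "w - z"] by simp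
      also have "norm (w - z) < 1" using w by (simp add: dist_norm norm_minus_commute)
      finally have "\<bar>Im w\<bar> \<le> \<bar>Im z\<bar> + 1" by simp
      then have "C * exp (T * \<bar>Im w\<bar>) \<le> C * exp (T * (\<bar>Im z\<bar> + 1))"
        using T C by (intro mult_left_mono) auto
      then show "G w \<in> ball 0 B" using bound[of w] unfolding B_def by simp
    qed (use False in auto)
    also have "B \<le> (C * exp T + 1) * exp (T * \<bar>Im z\<bar>)"
      using T unfolding B_def by (simp add: algebra_simps exp_add)
    then have "fact r * B / 1 ^ r \<le> fact r * ((C * exp T + 1) * exp (T * \<bar>Im z\<bar>))"
      by (simp add: mult_left_mono)
    finally show ?thesis by (simp add: mult.assoc)
  qed
  then show ?thesis by blast
qed

text \<open>\<open>log_energy F\<close> is \<open>\<integral> |F(t)|\<^sup>2 dt\<close> over the real line, written in the variable \<open>x = e\<^sup>t\<close>.\<close>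

definition log_energy :: "(complex \<Rightarrow> complex) \<Rightarrow> ennreal" where
  "log_energy F = (\<integral>\<^sup>+x. ennreal (indicator {0<..} x * (cmod (F (complex_of_real (ln x))))\<^sup>2 / x) \<partial>lborel)"

lemma log_energy_deriv_le:
  fixes F :: "complex \<Rightarrow> complex"
  assumes T: "T > 0" and F: "F holomorphic_on UNIV" and bound: "\<And>z. norm (F z) \<le> M * exp (T * \<bar>Im z\<bar>)"
  shows "log_energy (deriv F) \<le> ennreal (T\<^sup>2) * log_energy F"
  unfolding log_energy_def
proof (rule dx_over_x_energy_le_dilation_average[where \<beta> = "boas_weight T" and \<eta> = "boas_node T"])
  have "continuous_on UNIV F" by (rule holomorphic_on_imp_continuous_on[OF F])
  then have [measurable]: "F \<in> borel_measurable borel" by (rule borel_measurable_continuous_onI)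
  show "(\<lambda>x. cmod (F (complex_of_real (ln x)))) \<in> borel_measurable borel" by measurable
  show "\<And>n. 0 \<le> boas_weight T n" using boas_weight_nonneg[OF T] .
  show "boas_weight T sums T" by (rule boas_weight_sums[OF T])
  fix x :: real assume x: "x > 0"
  then have ln: "ln (x * exp (boas_node T n)) = ln x + boas_node T n" for n
    by (simp add: ln_mult)
  show "summable (\<lambda>n. boas_weight T n * cmod (F (complex_of_real (ln (x * exp (boas_node T n))))))"
    using boas_inequality(1)[OF T F bound, of "ln x"] by (simp add: ln)
  show "cmod (deriv F (complex_of_real (ln x)))
      \<le> (\<Sum>n. boas_weight T n * cmod (F (complex_of_real (ln (x * exp (boas_node T n))))))"
    using boas_inequality(2)[OF T F bound, of "ln x"] by (simp add: ln)
qed auto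

lemma log_energy_higher_deriv_le:
  fixes G :: "complex \<Rightarrow> complex"
  assumes T: "T > 0" and G: "G holomorphic_on UNIV" and bound: "\<And>z. norm (G z) \<le> C * exp (T * \<bar>Im z\<bar>)"
  shows "log_energy ((deriv ^^ n) G) \<le> ennreal (T ^ (2 * n)) * log_energy G"
proof (induction n)
  case (Suc n)
  obtain M where M: "\<And>z. norm ((deriv ^^ n) G z) \<le> M * exp (T * \<bar>Im z\<bar>)"
    using exponential_type_higher_deriv[OF G bound T] by blast
  have "log_energy ((deriv ^^ Suc n) G) \<le> ennreal (T\<^sup>2) * log_energy ((deriv ^^ n) G)"
    using log_energy_deriv_le[OF T holomorphic_higher_deriv[OF G] M] by simp
  also have "\<dots> \<le> ennreal (T\<^sup>2) * (ennreal (T ^ (2 * n)) * log_energy G)"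
    by (intro mult_left_mono Suc.IH) auto
  also have "\<dots> = ennreal (T\<^sup>2 * T ^ (2 * n)) * log_energy G"
    using T by (simp add: ennreal_mult mult.assoc)
  also have "T\<^sup>2 * T ^ (2 * n) = T ^ (2 * Suc n)" by (simp flip: power_add)
  finally show ?case .
qed simp

section \<open>The entire function attached to a Mellin--Bernstein function\<close>

lemma exp_eq_cis_shift: "exp z = complex_of_real (exp (Re z)) * cis (Im z - 2 * pi * of_int k)"
proof -
  have "cis (Im z - 2 * pi * of_int k) = cis (Im z)"
    by (simp add: cis.ctr sin_diff cos_diff)
  then show ?thesis by (simp add: exp_eq_polar)
qed

lemma exp_in_slit_plane:
  assumes "2 * pi * of_int k < Im z" "Im z < 2 * pi * of_int k + 2 * pi"
  shows "exp z \<in> slit_plane"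
proof -
  define \<theta> where "\<theta> = Im z - 2 * pi * of_int k"
  have \<theta>: "0 < \<theta>" "\<theta> < 2 * pi" using assms unfolding \<theta>_def by auto
  consider "\<theta> < pi" | "\<theta> = pi" | "pi < \<theta>" by linarith
  then have "sin \<theta> \<noteq> 0 \<or> cos \<theta> < 0"
  proof cases
    case 1
    then show ?thesis using \<theta> sin_gt_zero[of \<theta>] by simp
  next
    case 3
    then have "sin (\<theta> - pi) > 0" using \<theta> by (intro sin_gt_zero) auto
    then show ?thesis by (simp add: sin_diff)
  qed simp
  moreover have "exp z = complex_of_real (exp (Re z)) * cis \<theta>"
    unfolding \<theta>_def by (rule exp_eq_cis_shift)
  ultimately have "Im (exp z) \<noteq> 0 \<or> Re (exp z) < 0"
    by (auto simp: mult_less_0_iff)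
  then show ?thesis unfolding slit_plane_def by auto
qed

text \<open>The branches \<open>g\<^sub>k\<close> on the Riemann surface of the logarithm, read in the logarithmic
  coordinate \<open>z = log r + i\<theta>\<close>: the strip \<open>2\<pi>k \<le> Im z < 2\<pi>(k+1)\<close> carries the sheet \<open>g\<^sub>k\<close>.\<close>

definition sheet :: "complex \<Rightarrow> int" where
  "sheet z = \<lfloor>Im z / (2 * pi)\<rfloor>"

definition log_lift :: "(int \<Rightarrow> complex \<Rightarrow> complex) \<Rightarrow> complex \<Rightarrow> complex" where
  "log_lift g z = polar_val g (sheet z) (exp (Re z)) (Im z - 2 * pi * of_int (sheet z))"

lemma sheet_eqI:
  assumes "2 * pi * of_int k \<le> Im z" "Im z < 2 * pi * of_int k + 2 * pi"
  shows "sheet z = k"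
  unfolding sheet_def using assms by (intro floor_unique) (auto simp: field_simps)

lemma sheet_bounds: "2 * pi * of_int (sheet z) \<le> Im z" "Im z < 2 * pi * of_int (sheet z) + 2 * pi"
proof -
  have "of_int (sheet z) \<le> Im z / (2 * pi)" "Im z / (2 * pi) < of_int (sheet z) + 1"
    unfolding sheet_def by linarith+
  then show "2 * pi * of_int (sheet z) \<le> Im z" "Im z < 2 * pi * of_int (sheet z) + 2 * pi"
    by (auto simp: field_simps)
qed

lemma log_lift_eq_polar_val:
  assumes "2 * pi * of_int k \<le> Im z" "Im z < 2 * pi * of_int k + 2 * pi"
  shows "log_lift g z = polar_val g k (exp (Re z)) (Im z - 2 * pi * of_int k)"
  unfolding log_lift_def sheet_eqI[OF assms] ..

lemma log_lift_eq_branch: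
  assumes "2 * pi * of_int k < Im z" "Im z < 2 * pi * of_int k + 2 * pi"
  shows "log_lift g z = g k (exp z)"
  using assms unfolding log_lift_eq_polar_val[OF less_imp_le[OF assms(1)] assms(2)] polar_val_def
  by (simp add: exp_eq_cis_shift[of z k])

lemma log_lift_on_cut:
  assumes "Im z = 2 * pi * of_int k"
  shows "log_lift g z = bplus (g k) (exp (Re z))"
  using assms log_lift_eq_polar_val[of k z g] by (simp add: polar_val_def)

lemma norm_log_lift_le:
  assumes "\<forall>k. \<forall>\<theta>\<in>{0..2*pi}. \<forall>r>0. cmod (polar_val g k r \<theta>) \<le> C * exp (T * \<bar>2 * pi * of_int k + \<theta>\<bar>)"
  shows "norm (log_lift g z) \<le> C * exp (T * \<bar>Im z\<bar>)"
proof -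
  define \<theta> where "\<theta> = Im z - 2 * pi * of_int (sheet z)"
  have "\<theta> \<in> {0..2*pi}" using sheet_bounds[of z] unfolding \<theta>_def by auto
  then have "norm (log_lift g z) \<le> C * exp (T * \<bar>2 * pi * of_int (sheet z) + \<theta>\<bar>)"
    using assms unfolding log_lift_def \<theta>_def[symmetric] by simp
  then show ?thesis unfolding \<theta>_def by simp
qed

lemma log_lift_holomorphic_on_strip:
  assumes "g k holomorphic_on slit_plane"
  shows "log_lift g holomorphic_on {z. 2 * pi * of_int k < Im z \<and> Im z < 2 * pi * of_int k + 2 * pi}"
proof (rule holomorphic_transform)
  show "(g k \<circ> exp) holomorphic_on {z. 2 * pi * of_int k < Im z \<and> Im z < 2 * pi * of_int k + 2 * pi}"
    using exp_in_slit_plane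
    by (intro holomorphic_on_compose_gen[OF _ assms] holomorphic_intros) auto
qed (auto simp: log_lift_eq_branch)

lemma log_lift_eq_glued:
  assumes close: "\<bar>Im z - 2 * pi * of_int k\<bar> < pi"
    and glue: "\<And>x. x > 0 \<Longrightarrow> bminus (g (k - 1)) x = bplus (g k) x"
  shows "log_lift g z = glued g (k - 1) (exp z)"
proof -
  have Im_exp: "Im (exp z) = exp (Re z) * sin (Im z - 2 * pi * of_int k)"
    by (simp add: Im_exp sin_diff)
  consider "Im z > 2 * pi * of_int k" | "Im z = 2 * pi * of_int k" | "Im z < 2 * pi * of_int k"
    by linarith
  then show ?thesis
  proof cases
    case 1
    then have "sin (Im z - 2 * pi * of_int k) > 0" using close by (intro sin_gt_zero) auto
    then have "Im (exp z) > 0" using Im_exp by simp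
    then show ?thesis using 1 close log_lift_eq_branch[of k z g] by (simp add: glued_def)
  next
    case 2
    then have "exp z = complex_of_real (exp (Re z))" using exp_eq_cis_shift[of z k] by simp
    then show ?thesis using 2 glue log_lift_on_cut[OF 2] by (simp add: glued_def)
  next
    case 3
    then have "sin (Im z - 2 * pi * of_int k + pi) > 0" using close by (intro sin_gt_zero) auto
    then have "Im (exp z) < 0" using Im_exp by (simp add: sin_add mult_pos_neg)
    moreover have "log_lift g z = g (k - 1) (exp z)"
      using 3 close by (intro log_lift_eq_branch) (auto simp: algebra_simps)
    ultimately show ?thesis by (simp add: glued_def)
  qed
qed

lemma log_lift_holomorphic_near_cut:
  assumes Im_w: "Im w = 2 * pi * of_int k"
    and glue: "\<And>x. x > 0 \<Longrightarrow> bminus (g (k - 1)) x = bplus (g k) x"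
    and glued: "\<And>x \<rho>. x > 0 \<Longrightarrow> \<rho> > 0 \<Longrightarrow> ball (complex_of_real x) \<rho> \<subseteq> {z. Re z > 0} \<Longrightarrow>
                  glued g (k - 1) analytic_on ball (complex_of_real x) \<rho>"
  shows "\<exists>e>0. log_lift g holomorphic_on ball w e"
proof -
  define x0 where "x0 = exp (Re w)"
  have x0: "x0 > 0" unfolding x0_def by simp
  have exp_w: "exp w = complex_of_real x0"
    using exp_eq_cis_shift[of w k] Im_w unfolding x0_def by simp
  have "ball (complex_of_real x0) x0 \<subseteq> {z. Re z > 0}"
  proof
    fix z assume "z \<in> ball (complex_of_real x0) x0"
    then have "\<bar>Re (z - complex_of_real x0)\<bar> < x0"
      using abs_Re_le_cmod[of "z - complex_of_real x0"] by (simp add: dist_norm norm_minus_commute)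
    then show "z \<in> {z. Re z > 0}" by auto
  qed
  then have hol: "glued g (k - 1) holomorphic_on ball (complex_of_real x0) x0"
    using glued x0 analytic_imp_holomorphic by blast
  obtain d where d: "d > 0" "\<And>z. dist z w < d \<Longrightarrow> dist (exp z) (exp w) < x0"
    using continuous_on_exp[of UNIV "\<lambda>z. z", unfolded continuous_on_iff] x0 by fastforce
  define e where "e = min d pi"
  have e: "e > 0" unfolding e_def using d by simp
  have glued_eq: "log_lift g z = glued g (k - 1) (exp z)" if "z \<in> ball w e" for z
  proof (rule log_lift_eq_glued[OF _ glue])
    have "\<bar>Im z - Im w\<bar> < e"
      using that abs_Im_le_cmod[of "z - w"] by (simp add: dist_norm norm_minus_commute)
    then show "\<bar>Im z - 2 * pi * of_int k\<bar> < pi" unfolding e_def Im_w by auto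
  qed
  have "exp z \<in> ball (complex_of_real x0) x0" if "z \<in> ball w e" for z
    using d(2)[of z] that exp_w unfolding e_def by (simp add: dist_commute)
  then have "(glued g (k - 1) \<circ> exp) holomorphic_on ball w e"
    by (intro holomorphic_on_compose_gen[OF _ hol] holomorphic_intros) auto
  then have "log_lift g holomorphic_on ball w e"
    by (rule holomorphic_transform) (simp add: glued_eq)
  then show ?thesis using e by (intro exI[of _ e]) simp
qed

lemma log_lift_entire:
  assumes analytic: "\<And>k. g k analytic_on slit_plane"
    and glue: "\<And>k x. x > 0 \<Longrightarrow> bminus (g k) x = bplus (g (k + 1)) x"
    and glued: "\<And>k x \<rho>. x > 0 \<Longrightarrow> \<rho> > 0 \<Longrightarrow> ball (complex_of_real x) \<rho> \<subseteq> {z. Re z > 0} \<Longrightarrow>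
                  glued g k analytic_on ball (complex_of_real x) \<rho>"
  shows "log_lift g holomorphic_on UNIV"
proof (rule analytic_imp_holomorphic, unfold analytic_on_def, intro ballI)
  fix w :: complex
  define k where "k = sheet w"
  show "\<exists>e>0. log_lift g holomorphic_on ball w e"
  proof (cases "Im w = 2 * pi * of_int k")
    case True
    then show ?thesis
      using glue[where k = "k - 1"] glued by (intro log_lift_holomorphic_near_cut[of w k]) auto
  next
    case False
    define strip where "strip = {z. 2 * pi * of_int k < Im z \<and> Im z < 2 * pi * of_int k + 2 * pi}"
    have "open strip" unfolding strip_def
      by (intro open_Collect_conj open_Collect_less continuous_intros)
    moreover have "w \<in> strip"
      using False sheet_bounds[of w] unfolding strip_def k_def by auto
    ultimately obtain e where "e > 0" "ball w e \<subseteq> strip" using open_contains_ball by blast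
    moreover have "log_lift g holomorphic_on strip"
      unfolding strip_def using analytic by (intro log_lift_holomorphic_on_strip analytic_imp_holomorphic)
    ultimately show ?thesis using holomorphic_on_subset by blast
  qed
qed

lemma mellin_bernstein_entire_extension:
  assumes "mellin_bernstein c T f"
  obtains G C where "G holomorphic_on UNIV" "\<And>z. norm (G z) \<le> C * exp (T * \<bar>Im z\<bar>)"
    "\<And>s. G (complex_of_real s) = complex_of_real (exp s powr c) * f (exp s)"
proof -
  from assms[unfolded mellin_bernstein_def] obtain g where
    analytic: "\<forall>k. g k analytic_on slit_plane" and
    limits: "\<forall>k. \<forall>x>0. (\<exists>l. ((\<lambda>e::real. g k (of_real x + \<i> * of_real e)) \<longlongrightarrow> l) (at_right 0))
                 \<and> (\<exists>l. ((\<lambda>e::real. g k (of_real x - \<i> * of_real e)) \<longlongrightarrow> l) (at_right 0))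
                 \<and> bminus (g k) x = bplus (g (k + 1)) x" and
    real: "\<forall>x>0. bplus (g 0) x = of_real (x powr c) * f x" and
    glued: "\<forall>k. \<forall>x>0. \<forall>\<rho>>0. ball (complex_of_real x) \<rho> \<subseteq> {z. Re z > 0} \<longrightarrow>
                 glued g k analytic_on ball (complex_of_real x) \<rho>" and
    growth: "\<exists>C>0. \<forall>k. \<forall>\<theta>\<in>{0..2*pi}. \<forall>r>0.
                 cmod (polar_val g k r \<theta>) \<le> C * exp (T * \<bar>2 * pi * of_int k + \<theta>\<bar>)"
    by blast
  have glue: "bminus (g k) x = bplus (g (k + 1)) x" if "x > 0" for k x
    using limits that by blast
  have glued': "glued g k analytic_on ball (complex_of_real x) \<rho>"
    if "x > 0" "\<rho> > 0" "ball (complex_of_real x) \<rho> \<subseteq> {z. Re z > 0}" for k x \<rho>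
    using glued that by blast
  obtain C where C: "\<forall>k. \<forall>\<theta>\<in>{0..2*pi}. \<forall>r>0.
      cmod (polar_val g k r \<theta>) \<le> C * exp (T * \<bar>2 * pi * of_int k + \<theta>\<bar>)"
    using growth by blast
  show ?thesis
  proof (rule that)
    show "log_lift g holomorphic_on UNIV"
      using analytic by (intro log_lift_entire[OF _ glue glued']) blast
    show "norm (log_lift g z) \<le> C * exp (T * \<bar>Im z\<bar>)" for z by (rule norm_log_lift_le[OF C])
    fix s :: real
    have "log_lift g (complex_of_real s) = bplus (g 0) (exp s)"
      using log_lift_on_cut[of "complex_of_real s" 0 g] by simp
    also have "\<dots> = complex_of_real (exp s powr c) * f (exp s)"
      using real exp_gt_zero[of s] by blast
    finally show "log_lift g (complex_of_real s) = complex_of_real (exp s powr c) * f (exp s)" .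
  qed
qed

section \<open>Mellin derivatives and the space \<open>X\<^sup>2\<^sub>c\<close>\<close>

lemma mellin_deriv_log_pullback:
  fixes F :: "complex \<Rightarrow> complex" and h :: "real \<Rightarrow> complex"
  assumes F: "F holomorphic_on UNIV" and x: "x > 0"
    and h: "\<And>y. y > 0 \<Longrightarrow> h y = complex_of_real (y powr -c) * F (complex_of_real (ln y))"
  shows "mellin_deriv c h x = complex_of_real (x powr -c) * deriv F (complex_of_real (ln x))"
proof -
  define D where "D = complex_of_real (x powr -c) * ((1 / x) *\<^sub>R deriv F (complex_of_real (ln x)))
                      + complex_of_real (-c * x powr (-c - 1)) * F (complex_of_real (ln x))"
  have "(F has_field_derivative deriv F w) (at w)" for w
    using F by (simp add: DERIV_deriv_iff_field_differentiable holomorphic_on_imp_differentiable_at)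
  then have "((\<lambda>t. F (complex_of_real t)) has_vector_derivative deriv F (complex_of_real (ln x))) (at (ln x))"
    by (rule has_vector_derivative_real_field)
  moreover have "(ln has_vector_derivative (1 / x)) (at x)"
    using DERIV_ln_divide[OF x] by (simp add: has_real_derivative_iff_has_vector_derivative)
  ultimately have "((\<lambda>y. F (complex_of_real (ln y))) has_vector_derivative (1 / x) *\<^sub>R deriv F (complex_of_real (ln x))) (at x)"
    using vector_diff_chain_at by (auto simp: o_def)
  moreover have "((\<lambda>y. complex_of_real (y powr -c)) has_vector_derivative complex_of_real (-c * x powr (-c - 1))) (at x)"
    by (rule has_vector_derivative_of_real) (rule has_real_derivative_powr[OF x])
  ultimately have "((\<lambda>y. complex_of_real (y powr -c) * F (complex_of_real (ln y))) has_vector_derivative D) (at x)"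
    unfolding D_def by (rule has_vector_derivative_mult[rotated])
  then have "(h has_vector_derivative D) (at x)"
    by (rule has_vector_derivative_transform_within_open[of _ _ _ "{0<..}"]) (use x h in auto)
  then have mellin: "mellin_deriv c h x = complex_of_real x * D
      + complex_of_real c * (complex_of_real (x powr -c) * F (complex_of_real (ln x)))"
    unfolding mellin_deriv_def using h[OF x] by (simp add: vector_derivative_at)
  have "x * x powr (-c - 1) = x powr -c"
    using x by (simp add: powr_diff)
  then have pw: "complex_of_real x * complex_of_real (x powr (-c - 1)) = complex_of_real (x powr -c)"
    by (simp flip: of_real_mult)
  have inv: "complex_of_real x * complex_of_real (1 / x) = 1"
    using x by (simp flip: of_real_mult)
  have "complex_of_real x * D = complex_of_real (x powr -c) * deriv F (complex_of_real (ln x))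
      - complex_of_real c * (complex_of_real (x powr -c) * F (complex_of_real (ln x)))"
    unfolding D_def scaleR_conv_of_real distrib_left by (simp add: mult.assoc[symmetric] pw inv)
  with mellin show ?thesis by simp
qed

lemma mellin_deriv_iterate_eq:
  fixes G :: "complex \<Rightarrow> complex" and f :: "real \<Rightarrow> complex"
  assumes G: "G holomorphic_on UNIV"
    and G_real: "\<And>s. G (complex_of_real s) = complex_of_real (exp s powr c) * f (exp s)"
    and x: "x > 0"
  shows "(mellin_deriv c ^^ r) f x = complex_of_real (x powr -c) * (deriv ^^ r) G (complex_of_real (ln x))"
  using x
proof (induction r arbitrary: x)
  case 0
  then have "x powr -c * x powr c = 1" by (simp flip: powr_add)
  then show ?case using 0 G_real[of "ln x"] by (simp flip: mult.assoc of_real_mult)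
next
  case (Suc r)
  have "(deriv ^^ r) G holomorphic_on UNIV" using G by (intro holomorphic_higher_deriv) auto
  then show ?case
    using mellin_deriv_log_pullback[of "(deriv ^^ r) G" x "(mellin_deriv c ^^ r) f" c] Suc by simp
qed

definition mellin_energy :: "real \<Rightarrow> (real \<Rightarrow> complex) \<Rightarrow> ennreal" where
  "mellin_energy c h = (\<integral>\<^sup>+x. ennreal (indicator {0<..} x * ((cmod (h x))\<^sup>2 * x powr (2 * c - 1))) \<partial>lborel)"

lemma mellin_energy_finite: "X2 c h \<Longrightarrow> mellin_energy c h < \<infinity>"
  unfolding X2_def mellin_energy_def set_integrable_def
  by (auto simp: integrable_iff_bounded abs_mult)

lemma mellin_integrand_measurable:
  assumes "set_borel_measurable lborel {0<..} h"
  shows "(\<lambda>x. indicator {0<..} x * ((cmod (h x))\<^sup>2 * x powr (2 * c - 1))) \<in> borel_measurable lborel"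
proof -
  have "(\<lambda>x. (cmod (indicator {0<..} x *\<^sub>R h x))\<^sup>2 * x powr (2 * c - 1)) \<in> borel_measurable lborel"
    using assms unfolding set_borel_measurable_def by measurable
  also have "(\<lambda>x. (cmod (indicator {0<..} x *\<^sub>R h x))\<^sup>2 * x powr (2 * c - 1))
           = (\<lambda>x. indicator {0<..} x * ((cmod (h x))\<^sup>2 * x powr (2 * c - 1)))"
    by (auto simp: indicator_def)
  finally show ?thesis .
qed

lemma X2I_mellin_energy:
  assumes "set_borel_measurable lborel {0<..} h" and "mellin_energy c h < \<infinity>"
  shows "X2 c h"
  unfolding X2_def set_integrable_def
proof (intro conjI integrableI_nonneg)
  show "(\<lambda>x. indicator {0<..} x *\<^sub>R ((cmod (h x))\<^sup>2 * x powr (2 * c - 1))) \<in> borel_measurable lborel"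
    using mellin_integrand_measurable[OF assms(1)] by simp
  show "(\<integral>\<^sup>+x. ennreal (indicator {0<..} x *\<^sub>R ((cmod (h x))\<^sup>2 * x powr (2 * c - 1))) \<partial>lborel) < \<infinity>"
    using assms(2) unfolding mellin_energy_def by simp
qed (use assms(1) in auto)

lemma X2_norm_eq_mellin_energy:
  assumes "set_borel_measurable lborel {0<..} h"
  shows "X2_norm c h = sqrt (enn2real (mellin_energy c h))"
  unfolding X2_norm_def set_lebesgue_integral_def mellin_energy_def
  using mellin_integrand_measurable[OF assms]
  by (subst integral_eq_nn_integral) auto

lemma mellin_energy_log_pullback:
  assumes "\<And>x. x > 0 \<Longrightarrow> h x = complex_of_real (x powr -c) * F (complex_of_real (ln x))"
  shows "mellin_energy c h = log_energy F"
  unfolding mellin_energy_def log_energy_def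
proof (rule nn_integral_cong)
  fix x :: real
  show "ennreal (indicator {0<..} x * ((cmod (h x))\<^sup>2 * x powr (2 * c - 1)))
      = ennreal (indicator {0<..} x * (cmod (F (complex_of_real (ln x))))\<^sup>2 / x)"
  proof (cases "x > 0")
    case True
    have "(x powr -c)\<^sup>2 * x powr (2 * c - 1) = x powr (-c + -c + (2 * c - 1))"
      by (simp only: power2_eq_square flip: powr_add)
    also have "-c + -c + (2 * c - 1) = -1" by simp
    also have "x powr -1 = 1 / x" using True by (simp add: powr_minus_divide)
    finally have weight: "(x powr -c)\<^sup>2 * x powr (2 * c - 1) = 1 / x" .
    have "(cmod (h x))\<^sup>2 * x powr (2 * c - 1)
        = (cmod (F (complex_of_real (ln x))))\<^sup>2 * ((x powr -c)\<^sup>2 * x powr (2 * c - 1))"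
      unfolding assms[OF True] norm_mult power_mult_distrib norm_of_real power2_abs
      by (simp only: ac_simps)
    then show ?thesis using True unfolding weight by simp
  qed simp
qed

lemma set_borel_measurable_log_pullback:
  assumes F: "continuous_on UNIV F"
    and h: "\<And>x. x > 0 \<Longrightarrow> h x = complex_of_real (x powr -c) * F (complex_of_real (ln x))"
  shows "set_borel_measurable lborel {0<..} h"
proof -
  have [measurable]: "F \<in> borel_measurable borel" using F by (rule borel_measurable_continuous_onI)
  have "(\<lambda>x. indicator {0<..} x *\<^sub>R h x)
      = (\<lambda>x. indicator {0<..} x *\<^sub>R (complex_of_real (x powr -c) * F (complex_of_real (ln x))))"
  proof
    fix x :: real
    show "indicator {0<..} x *\<^sub>R h x
        = indicator {0<..} x *\<^sub>R (complex_of_real (x powr -c) * F (complex_of_real (ln x)))"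
      by (cases "x > 0") (simp_all add: h)
  qed
  also have "\<dots> \<in> borel_measurable lborel" by measurable
  finally show ?thesis unfolding set_borel_measurable_def .
qed

lemma X2_norm_le_if_mellin_energy_le:
  assumes h: "set_borel_measurable lborel {0<..} h" and k: "set_borel_measurable lborel {0<..} k"
    and finite: "mellin_energy c k < \<infinity>" and a: "a \<ge> 0"
    and le: "mellin_energy c h \<le> ennreal (a\<^sup>2) * mellin_energy c k"
  shows "X2 c h \<and> X2_norm c h \<le> a * X2_norm c k"
proof
  have "ennreal (a\<^sup>2) * mellin_energy c k < \<infinity>"
    using finite by (simp add: ennreal_mult_less_top)
  then show "X2 c h"
    using le by (intro X2I_mellin_energy[OF h]) auto
  have "enn2real (mellin_energy c h) \<le> enn2real (ennreal (a\<^sup>2) * mellin_energy c k)"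
    using le finite by (intro enn2real_mono) (auto simp: ennreal_mult_less_top)
  also have "\<dots> = a\<^sup>2 * enn2real (mellin_energy c k)"
    by (simp add: enn2real_mult)
  finally have "sqrt (enn2real (mellin_energy c h)) \<le> sqrt (a\<^sup>2 * enn2real (mellin_energy c k))"
    by simp
  then show "X2_norm c h \<le> a * X2_norm c k"
    using a unfolding X2_norm_eq_mellin_energy[OF h] X2_norm_eq_mellin_energy[OF k]
    by (simp add: real_sqrt_mult)
qed

theorem theorem5:
  fixes c T :: real and f :: "real \<Rightarrow> complex" and r :: nat
  assumes "T > 0" and "mellin_bernstein c T f"
  shows "X2 c ((mellin_deriv c ^^ r) f) \<and>
         X2_norm c ((mellin_deriv c ^^ r) f) \<le> T ^ r * X2_norm c f"
proof -
  obtain G C where G: "G holomorphic_on UNIV" and bound: "\<And>z. norm (G z) \<le> C * exp (T * \<bar>Im z\<bar>)"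
    and G_real: "\<And>s. G (complex_of_real s) = complex_of_real (exp s powr c) * f (exp s)"
    using mellin_bernstein_entire_extension[OF assms(2)] by blast
  have pullback: "(mellin_deriv c ^^ n) f x = complex_of_real (x powr -c) * (deriv ^^ n) G (complex_of_real (ln x))"
    if "x > 0" for n x
    using mellin_deriv_iterate_eq[OF G G_real that] .
  have measurable: "set_borel_measurable lborel {0<..} ((mellin_deriv c ^^ n) f)" for n
    using holomorphic_on_imp_continuous_on[OF holomorphic_higher_deriv[OF G]] pullback
    by (intro set_borel_measurable_log_pullback) auto
  have energy: "mellin_energy c ((mellin_deriv c ^^ n) f) = log_energy ((deriv ^^ n) G)" for n
    using pullback by (intro mellin_energy_log_pullback) auto
  have "mellin_energy c ((mellin_deriv c ^^ r) f) \<le> ennreal ((T ^ r)\<^sup>2) * mellin_energy c f"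
    using log_energy_higher_deriv_le[OF assms(1) G bound, of r] energy[of r] energy[of 0]
    by (simp add: power_mult[symmetric] mult.commute)
  moreover have "mellin_energy c f < \<infinity>"
    using assms(2) mellin_energy_finite unfolding mellin_bernstein_def by blast
  ultimately show ?thesis
    using measurable[of r] measurable[of 0] assms(1)
    by (intro X2_norm_le_if_mellin_energy_le) auto
qed

end
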